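(* Let $k\in\{-1,0,1\}$, $\beta>0$, let $\delta_k>0$ be the positive real solution of $\delta^3+k\delta-\frac{3\beta}{2}=0$, and let $R_b>0$ (with $R_b<1$ if $k=1$). Define \[ R_{\mathrm{AH}}=\frac{1}{\sqrt{\delta_k^2+k}},\quad C_k=\frac{1}{\sqrt{1-kR_b^2}+\delta_kR_b},\quad x_\Sigma=\frac{R_b\delta_k}{C_k},\quad \lambda_1=\frac{\beta R_b^3}{C_k},\quad \lambda_2=\frac{\beta C_k^2}{2\delta_k^3}, \] and, for $u>0$ and $r\ge x_\Sigma u$, $B(u,r)=1-\lambda_1\frac{u}{r}-\lambda_2\frac{r^2}{u^2}$; the apparent horizons of the exterior metric $g_{\mathrm{ext}}=-B(u,r)\,du^2-2\,du\,dr+r^2d\Omega^2$ on $r>x_\Sigma u$ are the hypersurfaces where $B=0$. Then: (1) If $R_b>R_{\mathrm{AH}}$, then $B(u,r)<0$ for all $u>0$, $r>x_\Sigma u$; in particular there is no apparent horizon in the exterior region. (2) If $R_b=R_{\mathrm{AH}}$, then $B(u,x_\Sigma u)=0$ for all $u>0$ (the exterior apparent horizon coincides with the matching surface $r=x_\Sigma u$), and $B(u,r)<0$ for all $r>x_\Sigma u$. (3) If $R_b<R_{\mathrm{AH}}$, then there exists $x_{\mathrm{AH}}>x_\Sigma$ such that the exterior metric has an apparent horizon at $r=x_{\mathrm{AH}}u$; moreover $B(u,r)>0$ for $x_\Sigma u<r<x_{\mathrm{AH}}u$ and $B(u,r)<0$ for $r>x_{\mathrm{AH}}u$.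
   Context: This is the exterior of the self-similar stellar model: the interior is $-dt^2+a(t)^2\big(\frac{dR^2}{1-kR^2}+R^2d\Omega^2\big)$ with $a(t)=\delta_k t$, the matching surface is $R=R_b$ in the interior and $r=x_\Sigma u$ in the exterior (with $u=C_kt$), and $R_{\mathrm{AH}}$ is the comoving radius of the interior apparent horizon. $d\Omega^2=d\theta^2+\sin^2\theta\,d\psi^2$. *)

theory Defs
  imports Complex_Main
begin

definition R_AH :: "real \<Rightarrow> real \<Rightarrow> real" where
  "R_AH k \<delta> = 1 / sqrt (\<delta>^2 + k)"

definition C_const :: "real \<Rightarrow> real \<Rightarrow> real \<Rightarrow> real" where
  "C_const k \<delta> Rb = 1 / (sqrt (1 - k * Rb^2) + \<delta> * Rb)"

definition x_Sigma :: "real \<Rightarrow> real \<Rightarrow> real \<Rightarrow> real" where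
  "x_Sigma k \<delta> Rb = Rb * \<delta> / C_const k \<delta> Rb"

definition lambda1 :: "real \<Rightarrow> real \<Rightarrow> real \<Rightarrow> real \<Rightarrow> real" where
  "lambda1 k \<beta> \<delta> Rb = \<beta> * Rb^3 / C_const k \<delta> Rb"

definition lambda2 :: "real \<Rightarrow> real \<Rightarrow> real \<Rightarrow> real \<Rightarrow> real" where
  "lambda2 k \<beta> \<delta> Rb = \<beta> * (C_const k \<delta> Rb)^2 / (2 * \<delta>^3)"

definition B_ext :: "real \<Rightarrow> real \<Rightarrow> real \<Rightarrow> real \<Rightarrow> real \<Rightarrow> real \<Rightarrow> real" where
  "B_ext k \<beta> \<delta> Rb u r = 1 - lambda1 k \<beta> \<delta> Rb * u / r - lambda2 k \<beta> \<delta> Rb * r^2 / u^2"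

end

theory Submission
  imports Defs
begin

text \<open>The exterior is self-similar: for \<open>u > 0\<close> the sign of \<open>B(u,r)\<close> depends only on
  \<open>x = r/u\<close>, through \<open>g(x) = 1 - \<lambda>\<^sub>1/x - \<lambda>\<^sub>2 x\<^sup>2\<close>. The matching conditions give
  \<open>\<lambda>\<^sub>1 = 2\<lambda>\<^sub>2 x\<^sub>\<Sigma>\<^sup>3\<close>, so \<open>g'(x) = 2\<lambda>\<^sub>2(x\<^sub>\<Sigma>\<^sup>3 - x\<^sup>3)/x\<^sup>2\<close> and \<open>g\<close> strictly decreases on
  \<open>[x\<^sub>\<Sigma>, \<infinity>)\<close> towards \<open>-\<infinity>\<close>. The cubic for \<open>\<delta>\<^sub>k\<close> turns \<open>g(x\<^sub>\<Sigma>)\<close> into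
  \<open>1 - (\<delta>\<^sub>k\<^sup>2 + k) R\<^sub>b\<^sup>2 = 1 - (R\<^sub>b/R\<^sub>A\<^sub>H)\<^sup>2\<close>. Hence \<open>g < 0\<close> beyond \<open>x\<^sub>\<Sigma>\<close> when
  \<open>R\<^sub>b \<ge> R\<^sub>A\<^sub>H\<close>, while for \<open>R\<^sub>b < R\<^sub>A\<^sub>H\<close> the intermediate value theorem yields a unique
  zero \<open>x\<^sub>A\<^sub>H > x\<^sub>\<Sigma>\<close>.\<close>

definition exterior_profile :: "real \<Rightarrow> real \<Rightarrow> real \<Rightarrow> real" where
  "exterior_profile l1 l2 x = 1 - l1 / x - l2 * x^2"

lemma B_ext_eq_exterior_profile:
  assumes "u > 0"
  shows "B_ext k \<beta> \<delta> Rb u r =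
    exterior_profile (lambda1 k \<beta> \<delta> Rb) (lambda2 k \<beta> \<delta> Rb) (r / u)"
  using assms unfolding B_ext_def exterior_profile_def by (simp add: power_divide)

lemma exterior_profile_strict_antimono:
  fixes l1 l2 xs x y :: real
  assumes "l2 > 0" "xs > 0" "l1 = 2 * l2 * xs^3" "xs \<le> y" "y < x"
  shows "exterior_profile l1 l2 x < exterior_profile l1 l2 y"
proof -
  have pos: "y > 0" "x > 0" using assms by auto
  have "xs^3 \<le> y^3" using assms by (simp add: power_mono)
  moreover have "y^3 < x * y^2" "y^3 < x^2 * y"
    using \<open>y < x\<close> pos by (simp_all add: power2_eq_square power3_eq_cube mult_strict_mono)
  ultimately have "2 * xs^3 < (x + y) * x * y"
    by (simp add: algebra_simps power2_eq_square power3_eq_cube)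
  then have "l1 < l2 * ((x + y) * x * y)"
    using assms by simp
  moreover have "exterior_profile l1 l2 y - exterior_profile l1 l2 x
      = (x - y) * (l2 * ((x + y) * x * y) - l1) / (x * y)"
    using pos by (simp add: exterior_profile_def field_simps power2_eq_square)
  moreover have "(x - y) * (l2 * ((x + y) * x * y) - l1) / (x * y) > 0"
    using \<open>l1 < _\<close> \<open>y < x\<close> pos by simp
  ultimately show ?thesis by simp
qed

lemma exterior_profile_eventually_negative:
  fixes l1 l2 a :: real
  assumes "l2 > 0" "l1 \<ge> 0"
  obtains M where "M > a" "exterior_profile l1 l2 M < 0"
proof
  define M where "M = \<bar>a\<bar> + sqrt (2 / l2) + 1"
  have "sqrt (2 / l2) \<ge> 0" using assms by simp
  then show "M > a" unfolding M_def by linarith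
  from \<open>sqrt (2 / l2) \<ge> 0\<close> have "M > 0" "sqrt (2 / l2) < M" unfolding M_def by linarith+
  have "(sqrt (2 / l2))^2 < M^2"
    using power_strict_mono[of "sqrt (2 / l2)" M 2] \<open>sqrt (2 / l2) < M\<close> assms by simp
  then have "2 < l2 * M^2" using assms by (simp add: field_simps)
  moreover have "l1 / M \<ge> 0" using assms \<open>M > 0\<close> by simp
  ultimately show "exterior_profile l1 l2 M < 0" unfolding exterior_profile_def by simp
qed

lemma strictly_decreasing_sign_change:
  fixes g :: "real \<Rightarrow> real"
  assumes dec: "\<And>x y. a \<le> y \<Longrightarrow> y < x \<Longrightarrow> g x < g y"
    and "\<And>x. a \<le> x \<Longrightarrow> isCont g x"
    and "M \<ge> a" "g M < 0" "g a > 0"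
  obtains x0 where "x0 > a" "g x0 = 0"
    "\<And>x. a < x \<Longrightarrow> x < x0 \<Longrightarrow> g x > 0" "\<And>x. x > x0 \<Longrightarrow> g x < 0"
proof -
  obtain x0 where x0: "a \<le> x0" "x0 \<le> M" "g x0 = 0"
    using IVT2[of g M 0 a] assms by auto
  with \<open>g a > 0\<close> have "x0 > a" by (cases "x0 = a") auto
  moreover have "g x > 0" if "a < x" "x < x0" for x using dec[of x x0] x0 that by simp
  moreover have "g x < 0" if "x > x0" for x using dec[of x0 x] x0 that by simp
  ultimately show ?thesis using that x0 by blast
qed

lemma exterior_profile_sign:
  fixes l1 l2 xs :: real
  assumes "l2 > 0" "xs > 0" "l1 = 2 * l2 * xs^3"
  shows "exterior_profile l1 l2 xs \<le> 0 \<Longrightarrow> x > xs \<Longrightarrow> exterior_profile l1 l2 x < 0"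
    and "exterior_profile l1 l2 xs > 0 \<Longrightarrow> \<exists>x0 > xs. exterior_profile l1 l2 x0 = 0
           \<and> (\<forall>x. xs < x \<and> x < x0 \<longrightarrow> exterior_profile l1 l2 x > 0)
           \<and> (\<forall>x > x0. exterior_profile l1 l2 x < 0)"
proof -
  let ?g = "exterior_profile l1 l2"
  have dec: "\<And>x y. xs \<le> y \<Longrightarrow> y < x \<Longrightarrow> ?g x < ?g y"
    using exterior_profile_strict_antimono assms by blast
  show "?g xs \<le> 0 \<Longrightarrow> x > xs \<Longrightarrow> ?g x < 0"
    using dec[of xs x] by simp
  assume "?g xs > 0"
  have "l1 \<ge> 0" using assms by simp
  then obtain M where "M > xs" "?g M < 0"
    using exterior_profile_eventually_negative \<open>l2 > 0\<close> by blast
  moreover have "\<And>x. xs \<le> x \<Longrightarrow> isCont ?g x"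
    using assms unfolding exterior_profile_def by (auto intro!: continuous_intros)
  ultimately obtain x0 where "x0 > xs" "?g x0 = 0"
    "\<And>x. xs < x \<Longrightarrow> x < x0 \<Longrightarrow> ?g x > 0" "\<And>x. x > x0 \<Longrightarrow> ?g x < 0"
    using strictly_decreasing_sign_change[of xs ?g M] dec \<open>?g xs > 0\<close> by (metis less_imp_le)
  then show "\<exists>x0 > xs. ?g x0 = 0 \<and> (\<forall>x. xs < x \<and> x < x0 \<longrightarrow> ?g x > 0) \<and> (\<forall>x > x0. ?g x < 0)"
    by blast
qed

lemma k_mult_sq_le_one:
  fixes k Rb :: real
  assumes "k \<in> {-1, 0, 1}" "Rb > 0" "k = 1 \<longrightarrow> Rb < 1"
  shows "k * Rb^2 \<le> 1"
  using assms power_strict_mono[of Rb 1 2] by (auto intro: order_trans[of _ 0])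

lemma C_const_pos:
  assumes "k * Rb^2 \<le> 1" "\<delta> > 0" "Rb > 0"
  shows "C_const k \<delta> Rb > 0"
  using assms unfolding C_const_def by (simp add: add_nonneg_pos)

lemma lambda1_eq_x_Sigma_cube:
  assumes "\<delta> \<noteq> 0"
  shows "lambda1 k \<beta> \<delta> Rb = 2 * lambda2 k \<beta> \<delta> Rb * x_Sigma k \<delta> Rb ^ 3"
  using assms unfolding lambda1_def lambda2_def x_Sigma_def
  by (cases "C_const k \<delta> Rb = 0") (simp_all add: field_simps power3_eq_cube power2_eq_square)

lemma exterior_profile_at_x_Sigma:
  assumes "\<delta>^3 + k * \<delta> - 3 * \<beta> / 2 = 0" "\<delta> \<noteq> 0" "C_const k \<delta> Rb \<noteq> 0"
  shows "exterior_profile (lambda1 k \<beta> \<delta> Rb) (lambda2 k \<beta> \<delta> Rb) (x_Sigma k \<delta> Rb)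
    = 1 - (\<delta>^2 + k) * Rb^2"
proof -
  have \<beta>: "\<beta> = 2 * \<delta> * (\<delta>^2 + k) / 3"
    using assms(1) by (simp add: algebra_simps power3_eq_cube power2_eq_square)
  show ?thesis
    using assms(2,3) unfolding exterior_profile_def lambda1_def lambda2_def x_Sigma_def \<beta>
    by (cases "Rb = 0") (simp_all add: field_simps power3_eq_cube power2_eq_square)
qed

lemma delta_sq_plus_k_pos:
  fixes \<delta> k \<beta> :: real
  assumes "\<delta>^3 + k * \<delta> - 3 * \<beta> / 2 = 0" "\<delta> > 0" "\<beta> > 0"
  shows "\<delta>^2 + k > 0"
proof -
  have "\<delta> * (\<delta>^2 + k) > 0"
    using assms by (simp add: algebra_simps power3_eq_cube power2_eq_square)
  then show ?thesis using \<open>\<delta> > 0\<close> by (simp add: zero_less_mult_iff)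
qed

lemma R_AH_compare:
  assumes "\<delta>^2 + k > 0" "Rb > 0"
  shows "R_AH k \<delta> < Rb \<longleftrightarrow> 1 < (\<delta>^2 + k) * Rb^2"
    and "R_AH k \<delta> = Rb \<longleftrightarrow> (\<delta>^2 + k) * Rb^2 = 1"
proof -
  have ratio: "Rb * sqrt (\<delta>^2 + k) = sqrt ((\<delta>^2 + k) * Rb^2)"
    using assms by (simp add: real_sqrt_mult mult.commute)
  have "R_AH k \<delta> < Rb \<longleftrightarrow> 1 < Rb * sqrt (\<delta>^2 + k)"
    using assms unfolding R_AH_def by (simp add: divide_less_eq mult.commute)
  then show "R_AH k \<delta> < Rb \<longleftrightarrow> 1 < (\<delta>^2 + k) * Rb^2"
    unfolding ratio by simp
  have "R_AH k \<delta> = Rb \<longleftrightarrow> Rb * sqrt (\<delta>^2 + k) = 1"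
    using assms unfolding R_AH_def by (auto simp: divide_eq_eq mult.commute)
  then show "R_AH k \<delta> = Rb \<longleftrightarrow> (\<delta>^2 + k) * Rb^2 = 1"
    unfolding ratio by simp
qed

lemma exterior_constants:
  fixes k \<beta> \<delta> Rb :: real
  assumes "k \<in> {-1, 0, 1}" "\<beta> > 0" "\<delta> > 0" "\<delta>^3 + k * \<delta> - 3 * \<beta> / 2 = 0"
    and "Rb > 0" "k = 1 \<longrightarrow> Rb < 1"
  shows "lambda2 k \<beta> \<delta> Rb > 0" "x_Sigma k \<delta> Rb > 0"
    and "lambda1 k \<beta> \<delta> Rb = 2 * lambda2 k \<beta> \<delta> Rb * x_Sigma k \<delta> Rb ^ 3"
    and "exterior_profile (lambda1 k \<beta> \<delta> Rb) (lambda2 k \<beta> \<delta> Rb) (x_Sigma k \<delta> Rb)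
      = 1 - (\<delta>^2 + k) * Rb^2"
proof -
  have "C_const k \<delta> Rb > 0" using C_const_pos k_mult_sq_le_one assms by blast
  then show "lambda2 k \<beta> \<delta> Rb > 0" "x_Sigma k \<delta> Rb > 0"
    and "exterior_profile (lambda1 k \<beta> \<delta> Rb) (lambda2 k \<beta> \<delta> Rb) (x_Sigma k \<delta> Rb)
      = 1 - (\<delta>^2 + k) * Rb^2"
    using assms exterior_profile_at_x_Sigma unfolding lambda2_def x_Sigma_def by auto
  show "lambda1 k \<beta> \<delta> Rb = 2 * lambda2 k \<beta> \<delta> Rb * x_Sigma k \<delta> Rb ^ 3"
    using lambda1_eq_x_Sigma_cube assms by simp
qed

theorem mainTheorem4:
  fixes k \<beta> \<delta> Rb :: real
  assumes hk: "k \<in> {-1, 0, 1}"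
    and h\<beta>: "\<beta> > 0"
    and h\<delta>pos: "\<delta> > 0"
    and h\<delta>eq: "\<delta>^3 + k * \<delta> - 3 * \<beta> / 2 = 0"
    and hRb: "Rb > 0"
    and hRb1: "k = 1 \<longrightarrow> Rb < 1"
  shows
    "(Rb > R_AH k \<delta> \<longrightarrow>
        (\<forall>u r. u > 0 \<and> r > x_Sigma k \<delta> Rb * u \<longrightarrow> B_ext k \<beta> \<delta> Rb u r < 0))
   \<and> (Rb = R_AH k \<delta> \<longrightarrow>
        (\<forall>u. u > 0 \<longrightarrow> B_ext k \<beta> \<delta> Rb u (x_Sigma k \<delta> Rb * u) = 0) \<and>
        (\<forall>u r. u > 0 \<and> r > x_Sigma k \<delta> Rb * u \<longrightarrow> B_ext k \<beta> \<delta> Rb u r < 0))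
   \<and> (Rb < R_AH k \<delta> \<longrightarrow>
        (\<exists>xAH > x_Sigma k \<delta> Rb.
           (\<forall>u. u > 0 \<longrightarrow> B_ext k \<beta> \<delta> Rb u (xAH * u) = 0) \<and>
           (\<forall>u r. u > 0 \<and> x_Sigma k \<delta> Rb * u < r \<and> r < xAH * u \<longrightarrow> B_ext k \<beta> \<delta> Rb u r > 0) \<and>
           (\<forall>u r. u > 0 \<and> r > xAH * u \<longrightarrow> B_ext k \<beta> \<delta> Rb u r < 0)))"
proof -
  define l1 l2 xs
    where "l1 = lambda1 k \<beta> \<delta> Rb" and "l2 = lambda2 k \<beta> \<delta> Rb" and "xs = x_Sigma k \<delta> Rb"
  let ?g = "exterior_profile l1 l2"
  note constants = exterior_constants[OF assms, folded l1_def l2_def xs_def]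
  have s: "\<delta>^2 + k > 0" using delta_sq_plus_k_pos h\<delta>eq h\<delta>pos h\<beta> by blast
  have B: "B_ext k \<beta> \<delta> Rb u r = ?g (r / u)" if "u > 0" for u r
    using B_ext_eq_exterior_profile that unfolding l1_def l2_def by blast
  have scale: "a * u < r \<longleftrightarrow> a < r / u" "r < a * u \<longleftrightarrow> r / u < a" if "u > 0" for a u r :: real
    using that by (simp_all add: pos_less_divide_eq pos_divide_less_eq)
  note sign = exterior_profile_sign[OF constants(1-3)]
  have outside_negative: "\<forall>u r. u > 0 \<and> r > xs * u \<longrightarrow> B_ext k \<beta> \<delta> Rb u r < 0"
    if "?g xs \<le> 0" using sign(1)[OF that] B scale by auto
  show ?thesis
    unfolding xs_def[symmetric]
  proof (intro conjI impI)
    assume "Rb > R_AH k \<delta>"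
    then show "\<forall>u r. u > 0 \<and> r > xs * u \<longrightarrow> B_ext k \<beta> \<delta> Rb u r < 0"
      using outside_negative R_AH_compare(1)[OF s hRb] constants(4) by simp
  next
    assume "Rb = R_AH k \<delta>"
    then have "?g xs = 0" using R_AH_compare(2)[OF s hRb] constants(4) by simp
    then show "\<forall>u. u > 0 \<longrightarrow> B_ext k \<beta> \<delta> Rb u (xs * u) = 0"
      and "\<forall>u r. u > 0 \<and> r > xs * u \<longrightarrow> B_ext k \<beta> \<delta> Rb u r < 0"
      using B outside_negative by simp_all
  next
    assume "Rb < R_AH k \<delta>"
    then have "?g xs > 0"
      using R_AH_compare[OF s hRb] constants(4)
      by (metis diff_gt_0_iff_gt linorder_neqE_linordered_idom not_less_iff_gr_or_eq)
    then obtain x0 where "x0 > xs" "?g x0 = 0"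
      "\<forall>x. xs < x \<and> x < x0 \<longrightarrow> ?g x > 0" "\<forall>x > x0. ?g x < 0"
      using sign(2) by blast
    then show "\<exists>xAH > xs.
           (\<forall>u. u > 0 \<longrightarrow> B_ext k \<beta> \<delta> Rb u (xAH * u) = 0) \<and>
           (\<forall>u r. u > 0 \<and> xs * u < r \<and> r < xAH * u \<longrightarrow> B_ext k \<beta> \<delta> Rb u r > 0) \<and>
           (\<forall>u r. u > 0 \<and> r > xAH * u \<longrightarrow> B_ext k \<beta> \<delta> Rb u r < 0)"
      using B scale by (intro exI[of _ x0]) auto
  qed
qed

end
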